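(* Let $\bar u\in L^\infty(\Omega)\cap U_{ad}$ be a local solution of the problem $\min_{u\in U_{ad}} f(u)+g(u)$ with respect to the $L^p(\Omega)$-topology for some $1\le p<\infty$ (i.e. $f(\bar u)+g(\bar u)\le f(u)+g(u)$ for all $u\in U_{ad}$ with $\|u-\bar u\|_{L^p(\Omega)}$ sufficiently small). Assume that $$f(u)-f(\bar u)=\int_\Omega \nabla f(\bar u)(u-\bar u)\,dx+o(\|u-\bar u\|_{L^1(\Omega)})\quad\text{as }\|u-\bar u\|_{L^1(\Omega)}\to0,\ u\in U_{ad}.$$ Then for almost every $x\in\Omega$, $$\bar u(x)\in\operatorname*{arg\,min}_{v\in\mathbb R,\ |v|\le b}\Big(\nabla f(\bar u)(x)\, v+\frac\alpha2 v^2+\beta|v|_0\Big).$$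
   Context: Let $\Omega\subset\mathbb R^n$ be a bounded open set with Lebesgue measure. Fix $\alpha\ge0$, $\beta>0$, $b\in(0,+\infty]$ and set $U_{ad}:=\{v\in L^2(\Omega): |v(x)|\le b\text{ a.e. in }\Omega\}$. For $t\in\mathbb R$ let $|t|_0:=0$ if $t=0$ and $|t|_0:=1$ if $t\ne0$; for measurable $u$ let $\|u\|_0:=\operatorname{meas}\{x\in\Omega:u(x)\ne0\}$. Define $g(u):=\frac\alpha2\|u\|_{L^2(\Omega)}^2+\beta\|u\|_0$. The function $f:L^2(\Omega)\to\mathbb R$ is Fréchet differentiable, and $\nabla f(u)\in L^2(\Omega)$ denotes the Riesz representative of its derivative, i.e. $f'(u)h=\int_\Omega\nabla f(u)h\,dx$. *)

theory Defs
  imports "HOL-Analysis.Analysis"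
begin

text \<open>All function spaces are over the measure space (Omega, Lebesgue measure restricted to Omega).
  Elements of L2 are represented by measurable real functions; f acts on representatives.\<close>

definition L2 :: "'a::euclidean_space set \<Rightarrow> ('a \<Rightarrow> real) set" where
  "L2 \<Omega> = {u. u \<in> borel_measurable (lebesgue_on \<Omega>) \<and>
                 integrable (lebesgue_on \<Omega>) (\<lambda>x. (u x)^2)}"

definition L2_norm :: "'a::euclidean_space set \<Rightarrow> ('a \<Rightarrow> real) \<Rightarrow> real" where
  "L2_norm \<Omega> u = sqrt (LINT x|lebesgue_on \<Omega>. (u x)^2)"

definition L1_norm :: "'a::euclidean_space set \<Rightarrow> ('a \<Rightarrow> real) \<Rightarrow> real" where
  "L1_norm \<Omega> u = (LINT x|lebesgue_on \<Omega>. \<bar>u x\<bar>)"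

definition Lp_norm :: "'a::euclidean_space set \<Rightarrow> real \<Rightarrow> ('a \<Rightarrow> real) \<Rightarrow> ereal" where
  "Lp_norm \<Omega> p u =
     (if integrable (lebesgue_on \<Omega>) (\<lambda>x. \<bar>u x\<bar> powr p)
      then ereal ((LINT x|lebesgue_on \<Omega>. \<bar>u x\<bar> powr p) powr (1/p))
      else \<infinity>)"

definition Uad :: "'a::euclidean_space set \<Rightarrow> ereal \<Rightarrow> ('a \<Rightarrow> real) set" where
  "Uad \<Omega> b = {v \<in> L2 \<Omega>. AE x in lebesgue_on \<Omega>. ereal \<bar>v x\<bar> \<le> b}"

definition Linfty :: "'a::euclidean_space set \<Rightarrow> ('a \<Rightarrow> real) set" where
  "Linfty \<Omega> = {u. u \<in> borel_measurable (lebesgue_on \<Omega>) \<and>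
                    (\<exists>C. AE x in lebesgue_on \<Omega>. \<bar>u x\<bar> \<le> C)}"

definition card0 :: "real \<Rightarrow> real" where
  "card0 t = (if t = 0 then 0 else 1)"

definition L0_norm :: "'a::euclidean_space set \<Rightarrow> ('a \<Rightarrow> real) \<Rightarrow> real" where
  "L0_norm \<Omega> u = measure lebesgue {x \<in> \<Omega>. u x \<noteq> 0}"

definition gfun :: "'a::euclidean_space set \<Rightarrow> real \<Rightarrow> real \<Rightarrow> ('a \<Rightarrow> real) \<Rightarrow> real" where
  "gfun \<Omega> \<alpha> \<beta> u = \<alpha> / 2 * (L2_norm \<Omega> u)^2 + \<beta> * L0_norm \<Omega> u"

text \<open>G in L2 is the Riesz representative of the Frechet derivative of f at u (w.r.t. the L2 norm).\<close>
definition frechet_grad ::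
  "'a::euclidean_space set \<Rightarrow> (('a \<Rightarrow> real) \<Rightarrow> real) \<Rightarrow> ('a \<Rightarrow> real) \<Rightarrow> ('a \<Rightarrow> real) \<Rightarrow> bool" where
  "frechet_grad \<Omega> f u G \<longleftrightarrow> G \<in> L2 \<Omega> \<and>
     (\<forall>\<epsilon>>0. \<exists>\<delta>>0. \<forall>v \<in> L2 \<Omega>. L2_norm \<Omega> (\<lambda>x. v x - u x) < \<delta> \<longrightarrow>
        \<bar>f v - f u - (LINT x|lebesgue_on \<Omega>. G x * (v x - u x))\<bar>
          \<le> \<epsilon> * L2_norm \<Omega> (\<lambda>x. v x - u x))"

definition pw_obj :: "real \<Rightarrow> real \<Rightarrow> real \<Rightarrow> real \<Rightarrow> real" where
  "pw_obj \<alpha> \<beta> q v = q * v + \<alpha> / 2 * v^2 + \<beta> * card0 v"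

definition pw_argmin :: "real \<Rightarrow> real \<Rightarrow> ereal \<Rightarrow> real \<Rightarrow> real set" where
  "pw_argmin \<alpha> \<beta> b q = {w. ereal \<bar>w\<bar> \<le> b \<and>
      (\<forall>v. ereal \<bar>v\<bar> \<le> b \<longrightarrow> pw_obj \<alpha> \<beta> q w \<le> pw_obj \<alpha> \<beta> q v)}"

end

theory Submission
  imports Defs
begin

text \<open>Needle variation. Suppose that on a set of positive measure some admissible value \<open>v\<close>
  beats \<open>ubar\<close> in the pointwise objective by at least \<open>\<delta>\<close>. Replacing \<open>ubar\<close> by \<open>v\<close> on a
  subset \<open>E\<close> of small positive measure changes \<open>ubar\<close> by at most \<open>C\<close> on \<open>E\<close> (as \<open>ubar\<close> is
  bounded), hence by \<open>O(|E|)\<close> in \<open>L^1\<close> and \<open>O(|E|^(1/p))\<close> in \<open>L^p\<close>, so local optimality applies.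
  By the \<open>L^1\<close>-expansion of \<open>f\<close> the objective then changes by its linearization up to
  \<open>o(|E|)\<close>, while the linearized objective drops by at least \<open>\<delta> |E|\<close>: a contradiction.
  Taking countably many rational \<open>v\<close> and \<open>\<delta> = 1/(n+1)\<close>, and using that the pointwise
  objective is continuous away from \<open>0\<close>, gives pointwise minimality almost everywhere.\<close>

lemma exists_small_ball:
  assumes "\<eta> > 0"
  shows "\<exists>r>0. \<forall>c::'a::euclidean_space. measure lborel (ball c r) < \<eta>"
proof -
  define V where "V = measure lborel (ball (0::'a) 1)"
  have "((\<lambda>r. r ^ DIM('a) * V) \<longlongrightarrow> 0 ^ DIM('a) * V) (at_right 0)"
    by (intro tendsto_mult tendsto_power tendsto_ident_at tendsto_const)
  then have "((\<lambda>r. r ^ DIM('a) * V) \<longlongrightarrow> 0) (at_right 0)"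
    by (simp add: zero_power)
  then have "\<forall>\<^sub>F r in at_right 0. r ^ DIM('a) * V < \<eta>"
    using assms by (rule order_tendstoD)
  then obtain r where "r > 0" "r ^ DIM('a) * V < \<eta>"
    unfolding eventually_at_right_field by (metis field_lbound_gt_zero zero_less_one)
  then show ?thesis
    using content_ball_conv_unit_ball[of r "_ :: 'a"] by (auto simp: V_def)
qed

lemma exists_small_positive_measure_subset:
  fixes A :: "'a::euclidean_space set"
  assumes "A \<in> sets lebesgue" "A \<notin> null_sets lebesgue" "\<eta> > 0"
  obtains E where "E \<subseteq> A" "E \<in> sets lebesgue" "0 < measure lebesgue E" "measure lebesgue E < \<eta>"
proof -
  obtain r where r: "r > 0" "\<And>c::'a. measure lborel (ball c r) < \<eta>"
    using exists_small_ball[OF assms(3)] by auto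
  obtain D :: "'a set" where D: "countable D" "\<And>X. open X \<Longrightarrow> X \<noteq> {} \<Longrightarrow> \<exists>d \<in> D. d \<in> X"
    by (rule countable_dense_setE) blast
  have "A = (\<Union>d\<in>D. A \<inter> ball d r)"
  proof (intro equalityI subsetI)
    fix x assume "x \<in> A"
    moreover obtain d where "d \<in> D" "d \<in> ball x r"
      using D(2)[of "ball x r"] r(1) by auto
    ultimately show "x \<in> (\<Union>d\<in>D. A \<inter> ball d r)"
      by (auto simp: dist_commute)
  qed auto
  then obtain d where d: "A \<inter> ball d r \<notin> null_sets lebesgue"
    using assms(2) D(1) by (metis null_sets_UN')
  have fm: "A \<inter> ball d r \<in> fmeasurable lebesgue"
    using assms(1) by (intro bounded_set_imp_lmeasurable) auto
  have "measure lebesgue (A \<inter> ball d r) \<le> measure lebesgue (ball d r)"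
    using fm by (intro measure_mono_fmeasurable) auto
  also have "\<dots> < \<eta>"
    using r(2)[of d] by (simp add: measure_completion)
  moreover have "0 < measure lebesgue (A \<inter> ball d r)"
    using fm d negligible_iff_measure0 negligible_iff_null_sets zero_less_measure_iff by blast
  ultimately show ?thesis
    using that[of "A \<inter> ball d r"] fm by (auto dest: fmeasurableD)
qed

lemma not_AE_lebesgue_on_obtain_small_subset:
  assumes \<Omega>: "\<Omega> \<in> sets lebesgue" and meas: "{x \<in> \<Omega>. \<not> P x} \<in> sets (lebesgue_on \<Omega>)"
    and not_AE: "\<not> (AE x in lebesgue_on \<Omega>. P x)" and "\<eta> > 0"
  obtains E where "E \<subseteq> {x \<in> \<Omega>. \<not> P x}" "E \<in> sets (lebesgue_on \<Omega>)"
    "0 < measure (lebesgue_on \<Omega>) E" "measure (lebesgue_on \<Omega>) E < \<eta>"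
proof -
  let ?A = "{x \<in> \<Omega>. \<not> P x}"
  have \<Omega>': "\<Omega> \<inter> space lebesgue \<in> sets lebesgue"
    using \<Omega> by simp
  have "?A \<notin> null_sets (lebesgue_on \<Omega>)"
    using not_AE AE_iff_null[of "lebesgue_on \<Omega>" P] meas by simp
  then have A: "?A \<in> sets lebesgue" "?A \<notin> null_sets lebesgue"
    using meas \<Omega>' by (auto simp: null_sets_restrict_space sets_restrict_space_iff)
  obtain E where "E \<subseteq> ?A" "E \<in> sets lebesgue" "0 < measure lebesgue E" "measure lebesgue E < \<eta>"
    using exists_small_positive_measure_subset[OF A \<open>\<eta> > 0\<close>] by blast
  then show ?thesis
    using that[of E] \<Omega>' by (auto simp: sets_restrict_space_iff measure_restrict_space)
qed

lemma integrable_mult_L2: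
  assumes "u \<in> L2 \<Omega>" "w \<in> L2 \<Omega>"
  shows "integrable (lebesgue_on \<Omega>) (\<lambda>x. u x * w x)"
proof (rule Bochner_Integration.integrable_bound)
  show "integrable (lebesgue_on \<Omega>) (\<lambda>x. (u x)^2 + (w x)^2)"
    using assms by (auto simp: L2_def)
  show "(\<lambda>x. u x * w x) \<in> borel_measurable (lebesgue_on \<Omega>)"
    using assms by (auto simp: L2_def)
  have "\<bar>a * c\<bar> \<le> a^2 + c^2" for a c :: real
  proof -
    have "2 * (\<bar>a\<bar> * \<bar>c\<bar>) \<le> a^2 + c^2"
      using sum_squares_bound[of "\<bar>a\<bar>" "\<bar>c\<bar>"] by (simp add: mult.assoc)
    moreover have "0 \<le> \<bar>a\<bar> * \<bar>c\<bar>"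
      by simp
    ultimately show ?thesis
      unfolding abs_mult by linarith
  qed
  then show "AE x in lebesgue_on \<Omega>. norm (u x * w x) \<le> norm ((u x)^2 + (w x)^2)"
    by auto
qed

lemma L0_norm_eq_integral:
  assumes \<Omega>: "\<Omega> \<in> sets lebesgue" and u: "u \<in> borel_measurable (lebesgue_on \<Omega>)"
  shows "L0_norm \<Omega> u = (LINT x|lebesgue_on \<Omega>. card0 (u x))"
proof -
  have "{x \<in> space (lebesgue_on \<Omega>). u x \<noteq> 0} \<in> sets (lebesgue_on \<Omega>)"
    using u by measurable
  then have S: "{x \<in> \<Omega>. u x \<noteq> 0} \<in> sets (lebesgue_on \<Omega>)"
    by simp
  have "(LINT x|lebesgue_on \<Omega>. card0 (u x)) = (LINT x|lebesgue_on \<Omega>. indicator {x \<in> \<Omega>. u x \<noteq> 0} x)"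
    by (rule Bochner_Integration.integral_cong) (auto simp: card0_def indicator_def)
  also have "\<dots> = measure lebesgue {x \<in> \<Omega>. u x \<noteq> 0}"
    using S \<Omega> by (simp add: Int_absorb2 measure_restrict_space)
  finally show ?thesis
    by (simp add: L0_norm_def)
qed

lemma
  assumes \<Omega>: "\<Omega> \<in> lmeasurable" and G: "G \<in> L2 \<Omega>" and u: "u \<in> L2 \<Omega>"
  shows integrable_pw_obj: "integrable (lebesgue_on \<Omega>) (\<lambda>x. pw_obj \<alpha> \<beta> (G x) (u x))"
    and integral_pw_obj: "(LINT x|lebesgue_on \<Omega>. pw_obj \<alpha> \<beta> (G x) (u x))
      = (LINT x|lebesgue_on \<Omega>. G x * u x) + gfun \<Omega> \<alpha> \<beta> u"
proof -
  interpret finite_measure "lebesgue_on \<Omega>"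
    using \<Omega> by (rule finite_measure_lebesgue_on)
  have u_meas[measurable]: "u \<in> borel_measurable (lebesgue_on \<Omega>)"
    and u2: "integrable (lebesgue_on \<Omega>) (\<lambda>x. (u x)^2)"
    using u by (auto simp: L2_def)
  have card0: "integrable (lebesgue_on \<Omega>) (\<lambda>x. card0 (u x))"
    by (rule Bochner_Integration.integrable_bound[OF integrable_const[of "1::real"]])
       (auto simp: card0_def)
  have Gu: "integrable (lebesgue_on \<Omega>) (\<lambda>x. G x * u x)"
    using G u by (rule integrable_mult_L2)
  show "integrable (lebesgue_on \<Omega>) (\<lambda>x. pw_obj \<alpha> \<beta> (G x) (u x))"
    unfolding pw_obj_def using Gu u2 card0 by auto
  have "(LINT x|lebesgue_on \<Omega>. (u x)^2) \<ge> 0"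
    by simp
  then have "gfun \<Omega> \<alpha> \<beta> u = \<alpha> / 2 * (LINT x|lebesgue_on \<Omega>. (u x)^2) + \<beta> * (LINT x|lebesgue_on \<Omega>. card0 (u x))"
    using \<Omega> by (simp add: gfun_def L2_norm_def L0_norm_eq_integral fmeasurableD)
  then show "(LINT x|lebesgue_on \<Omega>. pw_obj \<alpha> \<beta> (G x) (u x))
      = (LINT x|lebesgue_on \<Omega>. G x * u x) + gfun \<Omega> \<alpha> \<beta> u"
    unfolding pw_obj_def using Gu u2 card0
    by (simp add: Bochner_Integration.integral_add integrable_add)
qed

lemma gfun_diff_eq_integral:
  assumes \<Omega>: "\<Omega> \<in> lmeasurable" and G: "G \<in> L2 \<Omega>" and u: "u \<in> L2 \<Omega>" and w: "w \<in> L2 \<Omega>"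
  shows "gfun \<Omega> \<alpha> \<beta> u - gfun \<Omega> \<alpha> \<beta> w
    = (LINT x|lebesgue_on \<Omega>. pw_obj \<alpha> \<beta> (G x) (u x) - pw_obj \<alpha> \<beta> (G x) (w x))
      - (LINT x|lebesgue_on \<Omega>. G x * (u x - w x))"
proof -
  have "(LINT x|lebesgue_on \<Omega>. G x * (u x - w x))
      = (LINT x|lebesgue_on \<Omega>. G x * u x) - (LINT x|lebesgue_on \<Omega>. G x * w x)"
    using integrable_mult_L2[OF G u] integrable_mult_L2[OF G w]
    by (simp add: right_diff_distrib Bochner_Integration.integral_diff)
  then show ?thesis
    using integral_pw_obj[OF \<Omega> G u] integral_pw_obj[OF \<Omega> G w]
      integrable_pw_obj[OF \<Omega> G u] integrable_pw_obj[OF \<Omega> G w]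
    by (simp add: Bochner_Integration.integral_diff)
qed

lemma
  assumes \<Omega>: "\<Omega> \<in> lmeasurable" and E: "E \<in> sets (lebesgue_on \<Omega>)"
    and w: "w \<in> borel_measurable (lebesgue_on \<Omega>)"
    and dom: "AE x in lebesgue_on \<Omega>. \<bar>w x\<bar> \<le> C * indicator E x"
  shows L1_norm_le_indicator_bound: "L1_norm \<Omega> w \<le> C * measure (lebesgue_on \<Omega>) E"
    and Lp_norm_le_indicator_bound:
      "C \<ge> 0 \<Longrightarrow> p > 0 \<Longrightarrow> Lp_norm \<Omega> p w \<le> ereal (C * measure (lebesgue_on \<Omega>) E powr (1 / p))"
proof -
  interpret finite_measure "lebesgue_on \<Omega>"
    using \<Omega> by (rule finite_measure_lebesgue_on)
  have ind_int: "integrable (lebesgue_on \<Omega>) (\<lambda>x. c * indicator E x)" for c :: real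
    using integrable_real_mult_indicator[OF E integrable_const[of c]] by simp
  have ind_lint: "(LINT x|lebesgue_on \<Omega>. c * indicator E x) = c * measure (lebesgue_on \<Omega>) E" for c :: real
    using sets.sets_into_space[OF E] by (simp add: Int_absorb2)
  show "L1_norm \<Omega> w \<le> C * measure (lebesgue_on \<Omega>) E"
    unfolding L1_norm_def ind_lint[symmetric] using dom w
    by (intro integral_mono_AE ind_int Bochner_Integration.integrable_bound[OF ind_int[of C]])
       (auto elim!: eventually_mono)
  show "Lp_norm \<Omega> p w \<le> ereal (C * measure (lebesgue_on \<Omega>) E powr (1 / p))"
    if C: "C \<ge> 0" and p: "p > 0"
  proof -
    have dom_p: "AE x in lebesgue_on \<Omega>. \<bar>w x\<bar> powr p \<le> C powr p * indicator E x"
      using dom by eventually_elim (use C p in \<open>auto intro!: powr_mono2 simp: indicator_def split: if_splits\<close>)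
    have int_p: "integrable (lebesgue_on \<Omega>) (\<lambda>x. \<bar>w x\<bar> powr p)"
      using dom_p w by (intro Bochner_Integration.integrable_bound[OF ind_int[of "C powr p"]])
        (auto elim!: eventually_mono)
    have "(LINT x|lebesgue_on \<Omega>. \<bar>w x\<bar> powr p) \<le> C powr p * measure (lebesgue_on \<Omega>) E"
      unfolding ind_lint[symmetric] using dom_p by (intro integral_mono_AE int_p ind_int)
    then have "(LINT x|lebesgue_on \<Omega>. \<bar>w x\<bar> powr p) powr (1 / p)
        \<le> (C powr p * measure (lebesgue_on \<Omega>) E) powr (1 / p)"
      using p by (intro powr_mono2) auto
    also have "\<dots> = C * measure (lebesgue_on \<Omega>) E powr (1 / p)"
      using C p by (simp add: powr_mult powr_powr)
    finally show ?thesis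
      using int_p by (simp add: Lp_norm_def)
  qed
qed

lemma pw_obj_le_if_le_on_rationals:
  assumes le_rat: "\<And>r. r \<in> \<rat> \<Longrightarrow> ereal \<bar>r\<bar> \<le> b \<Longrightarrow> pw_obj \<alpha> \<beta> q w \<le> pw_obj \<alpha> \<beta> q r"
    and v: "ereal \<bar>v\<bar> \<le> b"
  shows "pw_obj \<alpha> \<beta> q w \<le> pw_obj \<alpha> \<beta> q v"
proof (cases "v = 0")
  case True
  then show ?thesis using le_rat[of 0] v by simp
next
  case False
  \<comment> \<open>Off \<open>0\<close> the objective is the polynomial \<open>\<psi>\<close>; approach \<open>v\<close> by rationals strictly
    between \<open>0\<close> and \<open>v\<close>.\<close>
  define I where "I = open_segment 0 v"
  define \<psi> where "\<psi> t = q * t + \<alpha> / 2 * t^2 + \<beta>" for t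
  have I_abs: "t \<noteq> 0 \<and> \<bar>t\<bar> < \<bar>v\<bar>" if "t \<in> I" for t
    using that by (auto simp: I_def open_segment_eq_real_ivl split: if_splits)
  have "open I" "I \<subseteq> closure \<rat>"
    by (auto simp: I_def open_segment_eq_real_ivl Rats_closure_real)
  then have "closure (I \<inter> \<rat>) = closed_segment 0 v"
    using False by (simp add: closure_open_Int_superset I_def)
  then have v_closure: "v \<in> closure (I \<inter> \<rat>)"
    by simp
  have le_\<psi>: "pw_obj \<alpha> \<beta> q w \<le> \<psi> t" if "t \<in> I \<inter> \<rat>" for t
  proof -
    have "ereal \<bar>t\<bar> \<le> b"
      using I_abs[of t] that v by (auto intro: order_trans[rotated])
    then show ?thesis
      using le_rat[of t] I_abs[of t] that by (simp add: pw_obj_def card0_def \<psi>_def)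
  qed
  have "continuous_on (closure (I \<inter> \<rat>)) \<psi>"
    unfolding \<psi>_def by (intro continuous_intros)
  then have "pw_obj \<alpha> \<beta> q w \<le> \<psi> v"
    using v_closure le_\<psi> by (rule continuous_ge_on_closure)
  then show ?thesis
    using False by (simp add: pw_obj_def card0_def \<psi>_def)
qed

lemma le_if_less_plus_inverse_Suc:
  fixes a c :: real
  assumes "\<And>n. a < c + 1 / real (Suc n)"
  shows "a \<le> c"
proof (rule ccontr)
  assume "\<not> a \<le> c"
  then obtain n where "inverse (real (Suc n)) < a - c"
    using reals_Archimedean[of "a - c"] by auto
  then show False
    using assms[of n] by (simp add: inverse_eq_divide)
qed

lemma AE_in_pw_argmin:
  assumes bounded: "AE x in M. ereal \<bar>u x\<bar> \<le> b"
    and no_improvement: "\<And>v \<delta>. ereal \<bar>v\<bar> \<le> b \<Longrightarrow> \<delta> > 0 \<Longrightarrow>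
      AE x in M. pw_obj \<alpha> \<beta> (q x) (u x) < pw_obj \<alpha> \<beta> (q x) v + \<delta>"
  shows "AE x in M. u x \<in> pw_argmin \<alpha> \<beta> b (q x)"
proof -
  define D where "D = {r \<in> \<rat>. ereal \<bar>r\<bar> \<le> b}"
  have "countable D"
    using countable_rat by (auto simp: D_def intro: countable_subset)
  then have "AE x in M. \<forall>r\<in>D. \<forall>n. pw_obj \<alpha> \<beta> (q x) (u x) < pw_obj \<alpha> \<beta> (q x) r + 1 / real (Suc n)"
    by (subst AE_ball_countable) (auto simp: AE_all_countable D_def no_improvement)
  with bounded show ?thesis
  proof eventually_elim
    case (elim x)
    then have "pw_obj \<alpha> \<beta> (q x) (u x) \<le> pw_obj \<alpha> \<beta> (q x) r" if "r \<in> \<rat>" "ereal \<bar>r\<bar> \<le> b" for r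
      using that by (intro le_if_less_plus_inverse_Suc) (auto simp: D_def)
    then show ?case
      using elim(1) by (auto simp: pw_argmin_def intro: pw_obj_le_if_le_on_rationals)
  qed
qed

lemma borel_measurable_pw_obj [measurable]:
  assumes [measurable]: "q \<in> borel_measurable M" "u \<in> borel_measurable M"
  shows "(\<lambda>x. pw_obj \<alpha> \<beta> (q x) (u x)) \<in> borel_measurable M"
  unfolding pw_obj_def card0_def by measurable

lemma needle_in_Uad:
  assumes \<Omega>: "\<Omega> \<in> lmeasurable" and ubar: "ubar \<in> Uad \<Omega> b"
    and v: "ereal \<bar>v\<bar> \<le> b" and E [measurable]: "E \<in> sets (lebesgue_on \<Omega>)"
  shows "(\<lambda>x. if x \<in> E then v else ubar x) \<in> Uad \<Omega> b"
proof -
  interpret finite_measure "lebesgue_on \<Omega>"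
    using \<Omega> by (rule finite_measure_lebesgue_on)
  have [measurable]: "ubar \<in> borel_measurable (lebesgue_on \<Omega>)"
    and ubar2: "integrable (lebesgue_on \<Omega>) (\<lambda>x. (ubar x)^2)"
    using ubar by (auto simp: Uad_def L2_def)
  have "integrable (lebesgue_on \<Omega>) (\<lambda>x. (if x \<in> E then v else ubar x)^2)"
    by (rule Bochner_Integration.integrable_bound[OF Bochner_Integration.integrable_add[OF integrable_const[of "v^2"] ubar2]])
       auto
  then show ?thesis
    using ubar v by (auto simp: Uad_def L2_def elim!: eventually_mono)
qed

lemma needle_norm_bounds:
  assumes \<Omega>: "\<Omega> \<in> lmeasurable" and [measurable]: "ubar \<in> borel_measurable (lebesgue_on \<Omega>)"
    and ubar_bounded: "AE x in lebesgue_on \<Omega>. \<bar>ubar x\<bar> \<le> K" and C: "\<bar>v\<bar> + \<bar>K\<bar> \<le> C"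
    and E [measurable]: "E \<in> sets (lebesgue_on \<Omega>)" and p: "p > 0"
  shows "L1_norm \<Omega> (\<lambda>x. (if x \<in> E then v else ubar x) - ubar x) \<le> C * measure (lebesgue_on \<Omega>) E"
    and "Lp_norm \<Omega> p (\<lambda>x. (if x \<in> E then v else ubar x) - ubar x)
      \<le> ereal (C * measure (lebesgue_on \<Omega>) E powr (1 / p))"
proof -
  have dom: "AE x in lebesgue_on \<Omega>. \<bar>(if x \<in> E then v else ubar x) - ubar x\<bar> \<le> C * indicator E x"
    using ubar_bounded by eventually_elim (use C in \<open>auto simp: indicator_def\<close>)
  have meas: "(\<lambda>x. (if x \<in> E then v else ubar x) - ubar x) \<in> borel_measurable (lebesgue_on \<Omega>)"
    by measurable
  show "L1_norm \<Omega> (\<lambda>x. (if x \<in> E then v else ubar x) - ubar x) \<le> C * measure (lebesgue_on \<Omega>) E"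
    using \<Omega> E meas dom by (rule L1_norm_le_indicator_bound)
  show "Lp_norm \<Omega> p (\<lambda>x. (if x \<in> E then v else ubar x) - ubar x)
      \<le> ereal (C * measure (lebesgue_on \<Omega>) E powr (1 / p))"
    using Lp_norm_le_indicator_bound[OF \<Omega> E meas dom _ p] C by simp
qed

lemma needle_linearized_gain:
  assumes \<Omega>: "\<Omega> \<in> lmeasurable" and ubar: "ubar \<in> Uad \<Omega> b" and G: "G \<in> L2 \<Omega>"
    and v: "ereal \<bar>v\<bar> \<le> b" and E: "E \<in> sets (lebesgue_on \<Omega>)"
    and gain: "\<And>x. x \<in> E \<Longrightarrow> pw_obj \<alpha> \<beta> (G x) v + \<delta> \<le> pw_obj \<alpha> \<beta> (G x) (ubar x)"
  defines "u \<equiv> \<lambda>x. if x \<in> E then v else ubar x"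
  shows "(LINT x|lebesgue_on \<Omega>. G x * (u x - ubar x)) + gfun \<Omega> \<alpha> \<beta> u - gfun \<Omega> \<alpha> \<beta> ubar
    \<le> - \<delta> * measure (lebesgue_on \<Omega>) E"
proof -
  interpret finite_measure "lebesgue_on \<Omega>"
    using \<Omega> by (rule finite_measure_lebesgue_on)
  have u_L2: "u \<in> L2 \<Omega>" and ubar_L2: "ubar \<in> L2 \<Omega>"
    using needle_in_Uad[OF \<Omega> ubar v E] ubar by (simp_all add: Uad_def u_def)
  have "(LINT x|lebesgue_on \<Omega>. pw_obj \<alpha> \<beta> (G x) (u x) - pw_obj \<alpha> \<beta> (G x) (ubar x))
      \<le> (LINT x|lebesgue_on \<Omega>. - \<delta> * indicator E x)"
  proof (rule integral_mono)
    show "integrable (lebesgue_on \<Omega>) (\<lambda>x. pw_obj \<alpha> \<beta> (G x) (u x) - pw_obj \<alpha> \<beta> (G x) (ubar x))"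
      using integrable_pw_obj[OF \<Omega> G u_L2] integrable_pw_obj[OF \<Omega> G ubar_L2] by simp
    show "integrable (lebesgue_on \<Omega>) (\<lambda>x. - \<delta> * indicator E x)"
      using integrable_real_mult_indicator[OF E integrable_const[of "- \<delta>"]] by simp
    show "pw_obj \<alpha> \<beta> (G x) (u x) - pw_obj \<alpha> \<beta> (G x) (ubar x) \<le> - \<delta> * indicator E x" for x
      using gain[of x] by (auto simp: u_def indicator_def)
  qed
  also have "\<dots> = - \<delta> * measure (lebesgue_on \<Omega>) E"
    using sets.sets_into_space[OF E] by (simp add: Int_absorb2)
  finally show ?thesis
    using gfun_diff_eq_integral[OF \<Omega> G u_L2 ubar_L2, where \<alpha> = \<alpha> and \<beta> = \<beta>] by linarith
qed

lemma no_uniform_pw_improvement: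
  fixes \<Omega> :: "'a::euclidean_space set"
  assumes \<Omega>: "\<Omega> \<in> lmeasurable"
    and ubar: "ubar \<in> Uad \<Omega> b" and ubar_bounded: "AE x in lebesgue_on \<Omega>. \<bar>ubar x\<bar> \<le> K"
    and G: "G \<in> L2 \<Omega>" and p: "p > 0"
    and locmin: "\<exists>\<epsilon>>0. \<forall>u \<in> Uad \<Omega> b. Lp_norm \<Omega> p (\<lambda>x. u x - ubar x) < ereal \<epsilon> \<longrightarrow>
                   f ubar + gfun \<Omega> \<alpha> \<beta> ubar \<le> f u + gfun \<Omega> \<alpha> \<beta> u"
    and expansion: "\<forall>\<epsilon>>0. \<exists>\<delta>>0. \<forall>u \<in> Uad \<Omega> b. L1_norm \<Omega> (\<lambda>x. u x - ubar x) < \<delta> \<longrightarrow>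
        \<bar>f u - f ubar - (LINT x|lebesgue_on \<Omega>. G x * (u x - ubar x))\<bar>
          \<le> \<epsilon> * L1_norm \<Omega> (\<lambda>x. u x - ubar x)"
    and v: "ereal \<bar>v\<bar> \<le> b" and \<delta>: "\<delta> > 0"
  shows "AE x in lebesgue_on \<Omega>. pw_obj \<alpha> \<beta> (G x) (ubar x) < pw_obj \<alpha> \<beta> (G x) v + \<delta>"
proof (rule ccontr)
  let ?M = "lebesgue_on \<Omega>"
  define C where "C = \<bar>v\<bar> + \<bar>K\<bar> + 1"
  have C: "C > 0"
    by (simp add: C_def add_nonneg_pos)
  obtain \<rho> where \<rho>: "\<rho> > 0" and locmin_\<rho>: "\<And>u. u \<in> Uad \<Omega> b \<Longrightarrow> Lp_norm \<Omega> p (\<lambda>x. u x - ubar x) < ereal \<rho> \<Longrightarrow>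
      f ubar + gfun \<Omega> \<alpha> \<beta> ubar \<le> f u + gfun \<Omega> \<alpha> \<beta> u"
    using locmin by blast
  \<comment> \<open>With \<open>\<epsilon> = \<delta>/(2C)\<close> the linearization error is at most half the gain \<open>\<delta> |E|\<close>.\<close>
  obtain \<sigma> where \<sigma>: "\<sigma> > 0" and expansion_\<sigma>: "\<And>u. u \<in> Uad \<Omega> b \<Longrightarrow> L1_norm \<Omega> (\<lambda>x. u x - ubar x) < \<sigma> \<Longrightarrow>
      \<bar>f u - f ubar - (LINT x|?M. G x * (u x - ubar x))\<bar> \<le> \<delta> / (2 * C) * L1_norm \<Omega> (\<lambda>x. u x - ubar x)"
    using expansion[rule_format, of "\<delta> / (2 * C)"] \<delta> C by auto
  have [measurable]: "ubar \<in> borel_measurable ?M" "G \<in> borel_measurable ?M"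
    using ubar G by (auto simp: Uad_def L2_def)
  have "{x \<in> space ?M. \<not> pw_obj \<alpha> \<beta> (G x) (ubar x) < pw_obj \<alpha> \<beta> (G x) v + \<delta>} \<in> sets ?M"
    by measurable
  then have meas: "{x \<in> \<Omega>. \<not> pw_obj \<alpha> \<beta> (G x) (ubar x) < pw_obj \<alpha> \<beta> (G x) v + \<delta>} \<in> sets ?M"
    by simp
  have \<eta>: "0 < min (\<sigma> / C) ((\<rho> / C) powr p)"
    using \<rho> \<sigma> C by simp
  assume "\<not> ?thesis"
  from not_AE_lebesgue_on_obtain_small_subset[OF fmeasurableD[OF \<Omega>] meas this \<eta>]
  obtain E where E: "E \<subseteq> {x \<in> \<Omega>. \<not> pw_obj \<alpha> \<beta> (G x) (ubar x) < pw_obj \<alpha> \<beta> (G x) v + \<delta>}"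
      "E \<in> sets ?M" "0 < measure ?M E" and E_small: "measure ?M E < min (\<sigma> / C) ((\<rho> / C) powr p)" .
  define m where "m = measure ?M E"
  define u where "u x = (if x \<in> E then v else ubar x)" for x
  have u: "u \<in> Uad \<Omega> b"
    unfolding u_def using needle_in_Uad[OF \<Omega> ubar v E(2)] .
  note norm_bounds = needle_norm_bounds[OF \<Omega> _ ubar_bounded _ E(2) p, of v C, folded u_def m_def]
  have L1_small: "L1_norm \<Omega> (\<lambda>x. u x - ubar x) \<le> C * m" "C * m < \<sigma>"
    using norm_bounds(1) E_small C by (simp_all add: C_def m_def pos_less_divide_eq mult.commute)
  have "m powr (1 / p) < ((\<rho> / C) powr p) powr (1 / p)"
    using E(3) E_small p by (intro powr_less_mono2) (simp_all add: m_def)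
  then have "C * m powr (1 / p) < \<rho>"
    using C p \<rho> by (simp add: powr_powr pos_less_divide_eq mult.commute)
  then have "Lp_norm \<Omega> p (\<lambda>x. u x - ubar x) < ereal \<rho>"
    using norm_bounds(2) by (simp add: C_def order.strict_trans1)
  then have opt: "f ubar + gfun \<Omega> \<alpha> \<beta> ubar \<le> f u + gfun \<Omega> \<alpha> \<beta> u"
    using u by (rule locmin_\<rho>[rotated])
  have "f u - f ubar - (LINT x|?M. G x * (u x - ubar x)) \<le> \<delta> / (2 * C) * L1_norm \<Omega> (\<lambda>x. u x - ubar x)"
    using expansion_\<sigma>[OF u] L1_small by (simp add: abs_le_iff)
  also have "\<dots> \<le> \<delta> / (2 * C) * (C * m)"
    using L1_small \<delta> C by (intro mult_left_mono) auto
  also have "\<dots> = \<delta> / 2 * m"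
    using C by simp
  finally have linearization: "f u - f ubar - (LINT x|?M. G x * (u x - ubar x)) \<le> \<delta> / 2 * m" .
  have "(LINT x|?M. G x * (u x - ubar x)) + gfun \<Omega> \<alpha> \<beta> u - gfun \<Omega> \<alpha> \<beta> ubar \<le> - \<delta> * m"
    unfolding u_def m_def using E(1) by (intro needle_linearized_gain[OF \<Omega> ubar G v E(2)]) auto
  moreover have "0 < \<delta> * m"
    using \<delta> E(3) by (simp add: m_def)
  ultimately show False
    using opt linearization by linarith
qed

theorem mainTheorem1:
  fixes \<Omega> :: "'a::euclidean_space set"
    and \<alpha> \<beta> p :: real and b :: ereal
    and f :: "('a \<Rightarrow> real) \<Rightarrow> real"
    and ubar G :: "'a \<Rightarrow> real"
  assumes "open \<Omega>" and "bounded \<Omega>"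
    and "\<alpha> \<ge> 0" and "\<beta> > 0" and "b > 0"
    and f_ae: "\<And>u v. u \<in> L2 \<Omega> \<Longrightarrow> v \<in> L2 \<Omega> \<Longrightarrow> (AE x in lebesgue_on \<Omega>. u x = v x) \<Longrightarrow> f u = f v"
    and f_diff: "\<forall>u \<in> L2 \<Omega>. \<exists>H. frechet_grad \<Omega> f u H"
    and G: "frechet_grad \<Omega> f ubar G"
    and ubar: "ubar \<in> Linfty \<Omega>" "ubar \<in> Uad \<Omega> b"
    and "1 \<le> p"
    and locmin: "\<exists>\<epsilon>>0. \<forall>u \<in> Uad \<Omega> b. Lp_norm \<Omega> p (\<lambda>x. u x - ubar x) < ereal \<epsilon> \<longrightarrow>
                   f ubar + gfun \<Omega> \<alpha> \<beta> ubar \<le> f u + gfun \<Omega> \<alpha> \<beta> u"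
    and expansion: "\<forall>\<epsilon>>0. \<exists>\<delta>>0. \<forall>u \<in> Uad \<Omega> b. L1_norm \<Omega> (\<lambda>x. u x - ubar x) < \<delta> \<longrightarrow>
        \<bar>f u - f ubar - (LINT x|lebesgue_on \<Omega>. G x * (u x - ubar x))\<bar>
          \<le> \<epsilon> * L1_norm \<Omega> (\<lambda>x. u x - ubar x)"
  shows "AE x in lebesgue_on \<Omega>. ubar x \<in> pw_argmin \<alpha> \<beta> b (G x)"
proof -
  have \<Omega>: "\<Omega> \<in> lmeasurable"
    using \<open>bounded \<Omega>\<close> \<open>open \<Omega>\<close> by (simp add: bounded_set_imp_lmeasurable)
  obtain K where K: "AE x in lebesgue_on \<Omega>. \<bar>ubar x\<bar> \<le> K"
    using ubar(1) by (auto simp: Linfty_def)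
  have G_L2: "G \<in> L2 \<Omega>"
    using G by (simp add: frechet_grad_def)
  have "AE x in lebesgue_on \<Omega>. ereal \<bar>ubar x\<bar> \<le> b"
    using ubar(2) by (simp add: Uad_def)
  then show ?thesis
    using no_uniform_pw_improvement[OF \<Omega> ubar(2) K G_L2 _ locmin expansion] \<open>1 \<le> p\<close>
    by (intro AE_in_pw_argmin) auto
qed

end
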